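(* Let $n\ge2$, $A=\{a_1,\dots,a_k\}$ finite, and $u_1,\dots,u_n:A\to\mathbb{R}$. In the Bid, Price \& Choose game defined in the context: (i) in every subgame-perfect Nash equilibrium the realized option is efficient (whatever the realization of the random draws), and every efficient option is the realized option of some subgame-perfect Nash equilibrium; (ii) in every subgame-perfect Nash equilibrium, the expected equilibrium payoffs $U^1,\dots,U^n$ satisfy $U^i-U^j=\mathrm{Avg}_i-\mathrm{Avg}_j$ for all $i,j$.
   Context: Players have quasi-linear utilities $u_i(a)+t_i$ and are expected-payoff maximizers. $\mathrm{Avg}_i=\frac1k\sum_l u_i(a_l)$; an option $a$ is efficient if it maximizes $\sum_{i=1}^n u_i(a)$ over $A$. Let $P=\{p\in\mathbb{R}^k:\sum_j p_j=0\}$. The $P^{n-1}\&C$ game with order of players $(\pi_1,\dots,\pi_n)$: $\pi_1$ chooses $p^2\in P$; for $m=2,\dots,n-1$, $\pi_m$, having observed $p^2,\dots,p^m$, chooses $p^{m+1}\in P$; $\pi_n$, having observed all prices, chooses $a\in A$; then $\pi_n$ pays $p^n(a)$ to $\pi_{n-1}$ and each $\pi_m$, $2\le m\le n-1$, pays $p^m(a)$ to $\pi_{m-1}$ and receives $p^{m+1}(a)$ from $\pi_{m+1}$. The Bid, Price \& Choose game: each player simultaneously submits a bid $b_i\ge0$; let $W=\{i:b_i=\max_j b_j\}$; one $i\in W$ is drawn uniformly at random, pays $b_i$ and becomes the first mover $\pi_1$, and every other player receives $b_i/(n-1)$; the order of the remaining players is drawn uniformly at random and made known; then the $P^{n-1}\&C$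 game is played in that order. A subgame-perfect Nash equilibrium is a profile of pure strategies (bids, and history-dependent price/option choices) inducing a Nash equilibrium (in expected payoffs) in every subgame. *)

theory Defs
  imports Main "HOL.Real"
begin

text \<open>Players are 0,...,n-1.  Options form a finite nonempty set A of type 'a.
  u i a is player i's utility for option a.  An order of players is a list
  pi (pi!0 is the first mover pi_1, pi!(n-1) the last mover pi_n).
  The price list ps has entries ps!j = p^(j+2), chosen by pi!j.\<close>

definition Pset :: "'a set \<Rightarrow> ('a \<Rightarrow> real) set" where
  "Pset A = {p. (\<forall>a. a \<notin> A \<longrightarrow> p a = 0) \<and> (\<Sum>a\<in>A. p a) = 0}"

text \<open>A history after the chance move consists
  of the bid profile, the drawn order, and the prices chosen so far.\<close>

record 'a strat =
  sbid :: real
  spr :: "(nat \<Rightarrow> real) \<Rightarrow> nat list \<Rightarrow> ('a \<Rightarrow> real) list \<Rightarrow> ('a \<Rightarrow> real)"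
  sch :: "(nat \<Rightarrow> real) \<Rightarrow> nat list \<Rightarrow> ('a \<Rightarrow> real) list \<Rightarrow> 'a"

definition valid_strat :: "'a set \<Rightarrow> 'a strat \<Rightarrow> bool" where
  "valid_strat A s \<longleftrightarrow> sbid s \<ge> 0
     \<and> (\<forall>b pi ps. spr s b pi ps \<in> Pset A)
     \<and> (\<forall>b pi ps. sch s b pi ps \<in> A)"

definition valid_profile :: "nat \<Rightarrow> 'a set \<Rightarrow> (nat \<Rightarrow> 'a strat) \<Rightarrow> bool" where
  "valid_profile n A \<sigma> \<longleftrightarrow> (\<forall>i<n. valid_strat A (\<sigma> i))"

definition valid_bids :: "nat \<Rightarrow> (nat \<Rightarrow> real) \<Rightarrow> bool" where
  "valid_bids n b \<longleftrightarrow> (\<forall>i. (i < n \<longrightarrow> b i \<ge> 0) \<and> (i \<ge> n \<longrightarrow> b i = 0))"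

definition bids_of :: "nat \<Rightarrow> (nat \<Rightarrow> 'a strat) \<Rightarrow> nat \<Rightarrow> real" where
  "bids_of n \<sigma> = (\<lambda>i. if i < n then sbid (\<sigma> i) else 0)"

definition winners :: "nat \<Rightarrow> (nat \<Rightarrow> real) \<Rightarrow> nat set" where
  "winners n b = {i. i < n \<and> b i = Max (b ` {..<n})}"

definition orders :: "nat \<Rightarrow> nat list set" where
  "orders n = {pi. distinct pi \<and> set pi = {..<n}}"

text \<open>Drawing the winner uniformly from W and then the order of the
  remaining players uniformly is the uniform distribution on this set.\<close>
definition orders_W :: "nat \<Rightarrow> (nat \<Rightarrow> real) \<Rightarrow> nat list set" where
  "orders_W n b = {pi \<in> orders n. hd pi \<in> winners n b}"

definition bid_transfer :: "nat \<Rightarrow> (nat \<Rightarrow> real) \<Rightarrow> nat list \<Rightarrow> nat \<Rightarrow> real" where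
  "bid_transfer n b pi i = (if i = hd pi then - b (hd pi) else b (hd pi) / real (n - 1))"

text \<open>Price p^(j+2) = ps!j is paid (evaluated at the option a) by pi!(j+1)
  to pi!j.\<close>
definition price_transfer ::
  "nat \<Rightarrow> nat list \<Rightarrow> ('a \<Rightarrow> real) list \<Rightarrow> 'a \<Rightarrow> nat \<Rightarrow> real" where
  "price_transfer n pi ps a i =
     (\<Sum>j<n - 1. (if pi ! j = i then (ps ! j) a else 0)
                - (if pi ! (Suc j) = i then (ps ! j) a else 0))"

definition payoff ::
  "nat \<Rightarrow> (nat \<Rightarrow> 'a \<Rightarrow> real) \<Rightarrow> (nat \<Rightarrow> real) \<Rightarrow> nat list \<Rightarrow> ('a \<Rightarrow> real) list
     \<Rightarrow> 'a \<Rightarrow> nat \<Rightarrow> real" where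
  "payoff n u b pi ps a i = u i a + price_transfer n pi ps a i + bid_transfer n b pi i"

fun ext_prices ::
  "(nat \<Rightarrow> 'a strat) \<Rightarrow> (nat \<Rightarrow> real) \<Rightarrow> nat list \<Rightarrow> nat \<Rightarrow> ('a \<Rightarrow> real) list
     \<Rightarrow> ('a \<Rightarrow> real) list" where
  "ext_prices \<sigma> b pi 0 ps = ps"
| "ext_prices \<sigma> b pi (Suc m) ps =
     ext_prices \<sigma> b pi m (ps @ [spr (\<sigma> (pi ! length ps)) b pi ps])"

definition final_prices ::
  "nat \<Rightarrow> (nat \<Rightarrow> 'a strat) \<Rightarrow> (nat \<Rightarrow> real) \<Rightarrow> nat list \<Rightarrow> ('a \<Rightarrow> real) list
     \<Rightarrow> ('a \<Rightarrow> real) list" where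
  "final_prices n \<sigma> b pi ps = ext_prices \<sigma> b pi (n - 1 - length ps) ps"

definition outcome_opt ::
  "nat \<Rightarrow> (nat \<Rightarrow> 'a strat) \<Rightarrow> (nat \<Rightarrow> real) \<Rightarrow> nat list \<Rightarrow> ('a \<Rightarrow> real) list \<Rightarrow> 'a" where
  "outcome_opt n \<sigma> b pi ps = sch (\<sigma> (pi ! (n - 1))) b pi (final_prices n \<sigma> b pi ps)"

definition cont_payoff ::
  "nat \<Rightarrow> (nat \<Rightarrow> 'a \<Rightarrow> real) \<Rightarrow> (nat \<Rightarrow> 'a strat) \<Rightarrow> (nat \<Rightarrow> real) \<Rightarrow> nat list
     \<Rightarrow> ('a \<Rightarrow> real) list \<Rightarrow> nat \<Rightarrow> real" where
  "cont_payoff n u \<sigma> b pi ps i =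
     payoff n u b pi (final_prices n \<sigma> b pi ps) (outcome_opt n \<sigma> b pi ps) i"

definition exp_payoff ::
  "nat \<Rightarrow> (nat \<Rightarrow> 'a \<Rightarrow> real) \<Rightarrow> (nat \<Rightarrow> 'a strat) \<Rightarrow> (nat \<Rightarrow> real) \<Rightarrow> nat \<Rightarrow> real" where
  "exp_payoff n u \<sigma> b i =
     (\<Sum>pi\<in>orders_W n b. cont_payoff n u \<sigma> b pi [] i) / real (card (orders_W n b))"

definition root_payoff ::
  "nat \<Rightarrow> (nat \<Rightarrow> 'a \<Rightarrow> real) \<Rightarrow> (nat \<Rightarrow> 'a strat) \<Rightarrow> nat \<Rightarrow> real" where
  "root_payoff n u \<sigma> i = exp_payoff n u \<sigma> (bids_of n \<sigma>) i"

definition SPE :: "nat \<Rightarrow> 'a set \<Rightarrow> (nat \<Rightarrow> 'a \<Rightarrow> real) \<Rightarrow> (nat \<Rightarrow> 'a strat) \<Rightarrow> bool" where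
  "SPE n A u \<sigma> \<longleftrightarrow> valid_profile n A \<sigma>
     \<and> (\<forall>i<n. \<forall>s. valid_strat A s \<longrightarrow>
          root_payoff n u (\<sigma>(i := s)) i \<le> root_payoff n u \<sigma> i)
     \<and> (\<forall>b. valid_bids n b \<longrightarrow> (\<forall>i<n. \<forall>s. valid_strat A s \<longrightarrow>
          exp_payoff n u (\<sigma>(i := s)) b i \<le> exp_payoff n u \<sigma> b i))
     \<and> (\<forall>b pi ps. valid_bids n b \<and> pi \<in> orders_W n b \<and> set ps \<subseteq> Pset A
          \<and> length ps \<le> n - 1 \<longrightarrow> (\<forall>i<n. \<forall>s. valid_strat A s \<longrightarrow>
          cont_payoff n u (\<sigma>(i := s)) b pi ps i \<le> cont_payoff n u \<sigma> b pi ps i))"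

definition efficient :: "nat \<Rightarrow> 'a set \<Rightarrow> (nat \<Rightarrow> 'a \<Rightarrow> real) \<Rightarrow> 'a \<Rightarrow> bool" where
  "efficient n A u a \<longleftrightarrow> a \<in> A \<and> (\<forall>a'\<in>A. (\<Sum>i<n. u i a') \<le> (\<Sum>i<n. u i a))"

definition realized :: "nat \<Rightarrow> (nat \<Rightarrow> 'a strat) \<Rightarrow> nat list \<Rightarrow> 'a" where
  "realized n \<sigma> pi = outcome_opt n \<sigma> (bids_of n \<sigma>) pi []"

definition avg :: "'a set \<Rightarrow> (nat \<Rightarrow> 'a \<Rightarrow> real) \<Rightarrow> nat \<Rightarrow> real" where
  "avg A u i = (\<Sum>a\<in>A. u i a) / real (card A)"

end

theory Submission
  imports Defs "HOL-Combinatorics.Multiset_Permutations"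
begin

text \<open>A zero-sum price posted in the price stage can extract from the players moving
  later at most their joint utility at the chosen option minus its average over A, and it extracts
  exactly that when it makes them indifferent.  Hence the mover at each position obtains the best
  joint utility of himself and his successors net of the price he pays, minus his successors'
  average utilities: the outcome is efficient, the first mover collects the surplus (the maximal
  welfare minus the sum of the average utilities) and every later mover gets his average utility.
  In the bidding stage, overbidding and dropping out force at least two highest bids, and equate
  the surplus net of the bid with the share of the bid that every loser receives.  Conversely,
  fair prices, a uniform bid and a tie-breaking rule that punishes the latest deviation from the
  fair prices implement any efficient option.\<close>

lemma arg_max_on_finite:
  fixes f :: "'a \<Rightarrow> 'b::linorder"
  assumes "finite S" "S \<noteq> {}"
  shows "arg_max_on f S \<in> S" and "\<And>y. y \<in> S \<Longrightarrow> f y \<le> f (arg_max_on f S)"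
proof -
  have "Max (f ` S) \<in> f ` S" using assms by simp
  then obtain x where "x \<in> S" "f x = Max (f ` S)" by auto
  then have "is_arg_max f (\<lambda>x. x \<in> S) x"
    using assms by (simp add: is_arg_max_linorder)
  then have "is_arg_max f (\<lambda>x. x \<in> S) (arg_max_on f S)"
    unfolding arg_max_on_def arg_max_def by (rule someI)
  then show "arg_max_on f S \<in> S" "\<And>y. y \<in> S \<Longrightarrow> f y \<le> f (arg_max_on f S)"
    by (simp_all add: is_arg_max_linorder)
qed

definition centered :: "'a set \<Rightarrow> ('a \<Rightarrow> real) \<Rightarrow> 'a \<Rightarrow> real" where
  "centered A f = (\<lambda>x. if x \<in> A then f x - (\<Sum>y\<in>A. f y) / card A else 0)"

lemma centered_in_Pset: "finite A \<Longrightarrow> centered A f \<in> Pset A"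
  by (cases "A = {}") (simp_all add: Pset_def centered_def sum_subtractf)

lemma diff_centered: "y \<in> A \<Longrightarrow> f y - centered A f y = (\<Sum>x\<in>A. f x) / card A"
  by (simp add: centered_def)

text \<open>The mean of f - q over A is the mean of f, and it is at most the maximum of f - q.\<close>

lemma Pset_le_at_argmax:
  assumes "finite A" "q \<in> Pset A" "x \<in> A" "\<forall>y\<in>A. f y - q y \<le> f x - q x"
  shows "q x \<le> f x - (\<Sum>y\<in>A. f y) / card A"
proof -
  have card: "0 < real (card A)" using assms(1,3) card_gt_0_iff by fastforce
  have "(\<Sum>y\<in>A. f y) = (\<Sum>y\<in>A. f y - q y)"
    using assms(2) by (simp add: Pset_def sum_subtractf)
  also have "\<dots> \<le> real (card A) * (f x - q x)"
    using assms(4) by (intro sum_bounded_above) auto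
  finally show ?thesis using card by (simp add: field_simps)
qed

lemma Pset_eq_centered_at_argmax:
  assumes "finite A" "q \<in> Pset A" "x \<in> A" "\<forall>y\<in>A. f y - q y \<le> f x - q x"
    and "q x = f x - (\<Sum>y\<in>A. f y) / card A"
  shows "q = centered A f"
proof
  define c where "c = (\<Sum>y\<in>A. f y) / card A"
  have card: "0 < real (card A)" using assms(1,3) card_gt_0_iff by fastforce
  have "(\<Sum>y\<in>A. c - (f y - q y)) = real (card A) * c - (\<Sum>y\<in>A. f y)"
    using assms(2) by (simp add: Pset_def sum_subtractf)
  also have "\<dots> = 0" using card by (simp add: c_def)
  moreover have "\<forall>y\<in>A. 0 \<le> c - (f y - q y)" using assms(4,5) unfolding c_def by auto
  ultimately have "\<forall>y\<in>A. c - (f y - q y) = 0"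
    by (subst sum_nonneg_eq_0_iff[OF assms(1), symmetric]) auto
  then show "q y = centered A f y" for y
    using assms(2) by (cases "y \<in> A") (auto simp: c_def centered_def Pset_def)
qed

lemma length_orders: "\<pi> \<in> orders n \<Longrightarrow> length \<pi> = n"
  unfolding orders_def by (metis (mono_tags) card_lessThan distinct_card mem_Collect_eq)

lemma nth_orders_less: "\<pi> \<in> orders n \<Longrightarrow> j < n \<Longrightarrow> \<pi> ! j < n"
  using length_orders[of \<pi> n] nth_mem[of j \<pi>] by (auto simp: orders_def)

lemma nth_orders_eq_iff:
  "\<pi> \<in> orders n \<Longrightarrow> j < n \<Longrightarrow> m < n \<Longrightarrow> \<pi> ! j = \<pi> ! m \<longleftrightarrow> j = m"
  using length_orders[of \<pi> n] by (simp add: orders_def nth_eq_iff_index_eq)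

lemma orders_obtain_position:
  assumes "\<pi> \<in> orders n" "i < n"
  obtains m where "m < n" "\<pi> ! m = i"
proof -
  have "i \<in> set \<pi>" using assms by (simp add: orders_def)
  then show thesis using that length_orders[OF assms(1)] by (auto simp: in_set_conv_nth)
qed

lemma hd_orders: "\<pi> \<in> orders n \<Longrightarrow> 0 < n \<Longrightarrow> hd \<pi> = \<pi> ! 0"
  using length_orders[of \<pi> n] by (cases \<pi>) auto

lemma sum_orders_nth: "\<pi> \<in> orders n \<Longrightarrow> (\<Sum>l<n. f (\<pi> ! l)) = (\<Sum>i<n. f i)"
  using length_orders[of \<pi> n]
  by (intro sum.reindex_bij_betw bij_betw_nth) (auto simp: orders_def)

lemma sum_orders_W_hd:
  assumes "0 < n"
  shows "(\<Sum>\<pi>\<in>orders_W n b. (g (hd \<pi>) :: real)) = fact (n - 1) * (\<Sum>j\<in>winners n b. g j)"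
proof -
  have W: "finite (winners n b)" "winners n b \<subseteq> {..<n}"
    by (auto simp: winners_def)
  have UN: "orders_W n b = (\<Union>j\<in>winners n b. (#) j ` permutations_of_set ({..<n} - {j}))"
  proof (intro equalityI subsetI)
    fix \<pi> assume \<pi>: "\<pi> \<in> orders_W n b"
    then have "\<pi> \<noteq> []" using length_orders[of \<pi> n] assms by (auto simp: orders_W_def)
    then obtain j rest where "\<pi> = j # rest" by (cases \<pi>) auto
    with \<pi> show "\<pi> \<in> (\<Union>j\<in>winners n b. (#) j ` permutations_of_set ({..<n} - {j}))"
      by (auto simp: orders_W_def orders_def permutations_of_set_def)
  qed (use W in \<open>auto simp: orders_W_def orders_def permutations_of_set_def\<close>)
  have "(\<Sum>\<pi>\<in>orders_W n b. g (hd \<pi>)) =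
      (\<Sum>j\<in>winners n b. \<Sum>\<pi>\<in>(#) j ` permutations_of_set ({..<n} - {j}). g (hd \<pi>))"
    unfolding UN by (rule sum.UNION_disjoint) (use W in auto)
  also have "\<dots> = (\<Sum>j\<in>winners n b. fact (n - 1) * g j)"
  proof (rule sum.cong)
    fix j assume "j \<in> winners n b"
    then have "card (permutations_of_set ({..<n} - {j})) = fact (n - 1)" using W by auto
    then show "(\<Sum>\<pi>\<in>(#) j ` permutations_of_set ({..<n} - {j}). g (hd \<pi>)) = fact (n - 1) * g j"
      by (simp add: sum.reindex)
  qed simp
  finally show ?thesis by (simp add: sum_distrib_left)
qed

lemma length_ext_prices [simp]: "length (ext_prices \<sigma> b \<pi> m ps) = length ps + m"
  by (induction m arbitrary: ps) auto

lemma ext_prices_add: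
  "ext_prices \<sigma> b \<pi> (j + m) ps = ext_prices \<sigma> b \<pi> m (ext_prices \<sigma> b \<pi> j ps)"
  by (induction j arbitrary: ps) auto

lemma ext_prices_Suc:
  "ext_prices \<sigma> b \<pi> (Suc m) ps =
     ext_prices \<sigma> b \<pi> m ps @ [spr (\<sigma> (\<pi> ! (length ps + m))) b \<pi> (ext_prices \<sigma> b \<pi> m ps)]"
  using ext_prices_add[of \<sigma> b \<pi> m 1 ps] by simp

lemma nth_ext_prices: "j < length ps \<Longrightarrow> ext_prices \<sigma> b \<pi> m ps ! j = ps ! j"
  by (induction m arbitrary: ps) (auto simp: nth_append)

lemma ext_prices_cong:
  assumes "\<And>ps'. length ps \<le> length ps' \<Longrightarrow> length ps' < length ps + m \<Longrightarrow>
      spr (\<sigma>' (\<pi> ! length ps')) b \<pi> ps' = spr (\<sigma> (\<pi> ! length ps')) b \<pi> ps'"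
  shows "ext_prices \<sigma>' b \<pi> m ps = ext_prices \<sigma> b \<pi> m ps"
  using assms
proof (induction m arbitrary: ps)
  case (Suc m)
  then have "ext_prices \<sigma>' b \<pi> m (ps @ [spr (\<sigma> (\<pi> ! length ps)) b \<pi> ps])
      = ext_prices \<sigma> b \<pi> m (ps @ [spr (\<sigma> (\<pi> ! length ps)) b \<pi> ps])"
    by (intro Suc.IH) auto
  then show ?case using Suc.prems[of ps] by simp
qed simp

lemma set_ext_prices_subset:
  assumes "\<And>ps'. length ps \<le> length ps' \<Longrightarrow> length ps' < length ps + m \<Longrightarrow>
      spr (\<sigma> (\<pi> ! length ps')) b \<pi> ps' \<in> P"
    and "set ps \<subseteq> P"
  shows "set (ext_prices \<sigma> b \<pi> m ps) \<subseteq> P"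
  using assms
proof (induction m arbitrary: ps)
  case (Suc m)
  have "set (ext_prices \<sigma> b \<pi> m (ps @ [spr (\<sigma> (\<pi> ! length ps)) b \<pi> ps])) \<subseteq> P"
    by (rule Suc.IH) (use Suc.prems in auto)
  then show ?case by simp
qed simp

lemma final_prices_full: "length ps = n - 1 \<Longrightarrow> final_prices n \<sigma> b \<pi> ps = ps"
  by (simp add: final_prices_def)

lemma final_prices_ext_prices:
  assumes "length ps + j \<le> n - 1"
  shows "final_prices n \<sigma> b \<pi> (ext_prices \<sigma> b \<pi> j ps) = final_prices n \<sigma> b \<pi> ps"
proof -
  have "n - 1 - length ps = j + (n - 1 - length (ext_prices \<sigma> b \<pi> j ps))"
    using assms by simp
  then show ?thesis unfolding final_prices_def by (simp add: ext_prices_add)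
qed

lemma outcome_opt_ext_prices:
  "length ps + j \<le> n - 1 \<Longrightarrow>
   outcome_opt n \<sigma> b \<pi> (ext_prices \<sigma> b \<pi> j ps) = outcome_opt n \<sigma> b \<pi> ps"
  unfolding outcome_opt_def by (simp add: final_prices_ext_prices)

lemma cont_payoff_ext_prices:
  "length ps + j \<le> n - 1 \<Longrightarrow>
   cont_payoff n u \<sigma> b \<pi> (ext_prices \<sigma> b \<pi> j ps) i = cont_payoff n u \<sigma> b \<pi> ps i"
  unfolding cont_payoff_def by (simp add: final_prices_ext_prices outcome_opt_ext_prices)

lemma final_prices_snoc:
  "length ps < n - 1 \<Longrightarrow>
   final_prices n \<sigma> b \<pi> (ps @ [spr (\<sigma> (\<pi> ! length ps)) b \<pi> ps]) = final_prices n \<sigma> b \<pi> ps"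
  using final_prices_ext_prices[of ps 1 n \<sigma> b \<pi>] by simp

lemma outcome_opt_snoc:
  "length ps < n - 1 \<Longrightarrow>
   outcome_opt n \<sigma> b \<pi> (ps @ [spr (\<sigma> (\<pi> ! length ps)) b \<pi> ps]) = outcome_opt n \<sigma> b \<pi> ps"
  using outcome_opt_ext_prices[of ps 1 n \<sigma> b \<pi>] by simp

lemma nth_final_prices: "j < length ps \<Longrightarrow> final_prices n \<sigma> b \<pi> ps ! j = ps ! j"
  unfolding final_prices_def by (rule nth_ext_prices)

lemma nth_final_prices_length:
  "length ps < n - 1 \<Longrightarrow>
   final_prices n \<sigma> b \<pi> ps ! length ps = spr (\<sigma> (\<pi> ! length ps)) b \<pi> ps"
  using final_prices_snoc[of ps n \<sigma> b \<pi>]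
    nth_final_prices[of "length ps" "ps @ [spr (\<sigma> (\<pi> ! length ps)) b \<pi> ps]" n \<sigma> b \<pi>]
  by simp

lemma exp_payoff_cong:
  assumes "\<And>j. spr (\<sigma>' j) = spr (\<sigma> j)" "\<And>j. sch (\<sigma>' j) = sch (\<sigma> j)"
  shows "exp_payoff n u \<sigma>' = exp_payoff n u \<sigma>"
proof -
  have "final_prices n \<sigma>' = final_prices n \<sigma>"
    unfolding final_prices_def using assms(1) by (intro ext ext_prices_cong) simp
  then show ?thesis using assms(2)
    unfolding exp_payoff_def cont_payoff_def outcome_opt_def by simp
qed

definition last_price :: "('a \<Rightarrow> real) list \<Rightarrow> 'a \<Rightarrow> real" where
  "last_price ps = (if ps = [] then (\<lambda>_. 0) else last ps)"

lemma last_price_snoc [simp]: "last_price (ps @ [q]) = q"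
  by (simp add: last_price_def)

lemma price_transfer_nth:
  assumes "\<pi> \<in> orders n" "m < n"
  shows "price_transfer n \<pi> ps a (\<pi> ! m) =
     (if m < n - 1 then (ps ! m) a else 0) - (if 0 < m then (ps ! (m - 1)) a else 0)"
proof -
  have "price_transfer n \<pi> ps a (\<pi> ! m) =
     (\<Sum>j<n - 1. if j = m then (ps ! j) a else 0) - (\<Sum>j<n - 1. if j = m - 1 \<and> 0 < m then (ps ! j) a else 0)"
    unfolding price_transfer_def sum_subtractf
    using nth_orders_eq_iff[OF assms(1) _ assms(2)] by (intro arg_cong2[where f="(-)"] sum.cong) auto
  moreover have "0 < m \<Longrightarrow> m - 1 < n - 1" using assms(2) by linarith
  ultimately show ?thesis by (simp add: sum.delta')
qed

lemma cont_payoff_mover: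
  assumes "\<pi> \<in> orders n" "length ps < n"
  shows "cont_payoff n u \<sigma> b \<pi> ps (\<pi> ! length ps) =
     u (\<pi> ! length ps) (outcome_opt n \<sigma> b \<pi> ps) - last_price ps (outcome_opt n \<sigma> b \<pi> ps)
     + (if length ps < n - 1 then spr (\<sigma> (\<pi> ! length ps)) b \<pi> ps (outcome_opt n \<sigma> b \<pi> ps) else 0)
     + bid_transfer n b \<pi> (\<pi> ! length ps)"
proof -
  have "(if 0 < length ps then (final_prices n \<sigma> b \<pi> ps ! (length ps - 1)) x else 0) = last_price ps x" for x
    using nth_final_prices[of "length ps - 1" ps] by (auto simp: last_price_def last_conv_nth)
  then show ?thesis
    unfolding cont_payoff_def payoff_def price_transfer_nth[OF assms(1,2)]
    by (simp add: nth_final_prices_length)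
qed

lemma cont_payoff_previous_mover:
  assumes "\<pi> \<in> orders n" "length ps < n - 1"
  shows "cont_payoff n u \<sigma> b \<pi> (ps @ [q]) (\<pi> ! length ps) =
     u (\<pi> ! length ps) (outcome_opt n \<sigma> b \<pi> (ps @ [q])) - last_price ps (outcome_opt n \<sigma> b \<pi> (ps @ [q]))
     + q (outcome_opt n \<sigma> b \<pi> (ps @ [q])) + bid_transfer n b \<pi> (\<pi> ! length ps)"
proof -
  have Ln: "length ps < n" using assms(2) by simp
  have "(if 0 < length ps then (final_prices n \<sigma> b \<pi> (ps @ [q]) ! (length ps - 1)) x else 0)
      = last_price ps x" for x
    using nth_final_prices[of "length ps - 1" "ps @ [q]"]
    by (auto simp: last_price_def last_conv_nth nth_append)
  moreover have "final_prices n \<sigma> b \<pi> (ps @ [q]) ! length ps = q"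
    using nth_final_prices[of "length ps" "ps @ [q]"] by simp
  ultimately show ?thesis using assms(2)
    unfolding cont_payoff_def payoff_def price_transfer_nth[OF assms(1) Ln]
    by simp
qed

lemma ext_prices_deviate_elsewhere:
  assumes "\<pi> \<in> orders n" "m < n" "length ps + k \<le> n"
    and "m < length ps \<or> length ps + k \<le> m"
  shows "ext_prices (\<sigma>(\<pi> ! m := s)) b \<pi> k ps = ext_prices \<sigma> b \<pi> k ps"
proof (rule ext_prices_cong)
  fix ps' :: "('a \<Rightarrow> real) list"
  assume "length ps \<le> length ps'" "length ps' < length ps + k"
  then have "\<pi> ! length ps' \<noteq> \<pi> ! m"
    using nth_orders_eq_iff[OF assms(1) _ assms(2), of "length ps'"] assms(3,4) by auto
  then show "spr ((\<sigma>(\<pi> ! m := s)) (\<pi> ! length ps')) b \<pi> ps' = spr (\<sigma> (\<pi> ! length ps')) b \<pi> ps'"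
    by simp
qed

lemma cont_payoff_deviate_past:
  assumes "\<pi> \<in> orders n" "m < length ps" "length ps \<le> n - 1"
  shows "cont_payoff n u' (\<sigma>(\<pi> ! m := s)) b \<pi> ps = cont_payoff n u' \<sigma> b \<pi> ps"
proof -
  have "\<pi> ! (n - 1) \<noteq> \<pi> ! m" using nth_orders_eq_iff[OF assms(1), of "n - 1" m] assms by auto
  moreover have "final_prices n (\<sigma>(\<pi> ! m := s)) b \<pi> ps = final_prices n \<sigma> b \<pi> ps"
    unfolding final_prices_def using assms by (intro ext_prices_deviate_elsewhere[OF assms(1)]) auto
  ultimately show ?thesis unfolding cont_payoff_def outcome_opt_def by simp
qed

lemma cont_payoff_deviate_mover:
  assumes "\<pi> \<in> orders n" "length ps < n - 1"
  shows "cont_payoff n u' (\<sigma>(\<pi> ! length ps := s)) b \<pi> ps =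
    cont_payoff n u' \<sigma> b \<pi> (ps @ [spr s b \<pi> ps])"
proof -
  have "cont_payoff n u' (\<sigma>(\<pi> ! length ps := s)) b \<pi> ps =
    cont_payoff n u' (\<sigma>(\<pi> ! length ps := s)) b \<pi> (ps @ [spr s b \<pi> ps])"
    using cont_payoff_ext_prices[of ps 1 n u' "\<sigma>(\<pi> ! length ps := s)" b \<pi>] assms(2)
    by (simp add: fun_eq_iff)
  also have "\<dots> = cont_payoff n u' \<sigma> b \<pi> (ps @ [spr s b \<pi> ps])"
    using cont_payoff_deviate_past[OF assms(1), of "length ps" "ps @ [spr s b \<pi> ps]"] assms(2)
    by simp
  finally show ?thesis .
qed

subsection \<open>Backward induction in the price stage\<close>

locale bid_price_choose =
  fixes n :: nat and A :: "'a set" and u :: "nat \<Rightarrow> 'a \<Rightarrow> real"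
  assumes two_le_n: "2 \<le> n" and finite_A: "finite A" and A_nonempty: "A \<noteq> {}"
begin

definition tail_utility :: "nat list \<Rightarrow> nat \<Rightarrow> 'a \<Rightarrow> real" where
  "tail_utility \<pi> L x = (\<Sum>l\<in>{L..<n}. u (\<pi> ! l) x)"

definition tail_avg :: "nat list \<Rightarrow> nat \<Rightarrow> real" where
  "tail_avg \<pi> L = (\<Sum>l\<in>{L..<n}. avg A u (\<pi> ! l))"

lemma card_A_pos: "0 < card A"
  using finite_A A_nonempty by (simp add: card_gt_0_iff)

lemma tail_avg_eq_mean: "tail_avg \<pi> L = (\<Sum>x\<in>A. tail_utility \<pi> L x) / card A"
  unfolding tail_avg_def tail_utility_def avg_def
  by (subst sum.swap) (simp add: sum_divide_distrib)

lemma tail_utility_Suc: "L < n \<Longrightarrow> tail_utility \<pi> L x = u (\<pi> ! L) x + tail_utility \<pi> (Suc L) x"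
  unfolding tail_utility_def by (simp add: sum.atLeast_Suc_lessThan)

lemma tail_avg_Suc: "L < n \<Longrightarrow> tail_avg \<pi> L = avg A u (\<pi> ! L) + tail_avg \<pi> (Suc L)"
  unfolding tail_avg_def by (simp add: sum.atLeast_Suc_lessThan)

lemma tail_utility_n [simp]: "tail_utility \<pi> n x = 0"
  by (simp add: tail_utility_def)

lemma tail_avg_n [simp]: "tail_avg \<pi> n = 0"
  by (simp add: tail_avg_def)

lemma tail_utility_0: "\<pi> \<in> orders n \<Longrightarrow> tail_utility \<pi> 0 x = (\<Sum>i<n. u i x)"
  unfolding tail_utility_def atLeast0LessThan by (rule sum_orders_nth)

lemma tail_avg_0: "\<pi> \<in> orders n \<Longrightarrow> tail_avg \<pi> 0 = (\<Sum>i<n. avg A u i)"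
  unfolding tail_avg_def atLeast0LessThan by (rule sum_orders_nth)

lemma valid_profile_strat: "valid_profile n A \<sigma> \<Longrightarrow> i < n \<Longrightarrow> valid_strat A (\<sigma> i)"
  by (simp add: valid_profile_def)

lemma spr_in_Pset:
  assumes "valid_profile n A \<sigma>" "\<pi> \<in> orders n" "m < n"
  shows "spr (\<sigma> (\<pi> ! m)) b \<pi> ps \<in> Pset A"
  using valid_profile_strat[OF assms(1) nth_orders_less[OF assms(2,3)]] by (simp add: valid_strat_def)

lemma outcome_opt_in_A:
  assumes "valid_profile n A \<sigma>" "\<pi> \<in> orders n"
  shows "outcome_opt n \<sigma> b \<pi> ps \<in> A"
proof -
  have "n - 1 < n" using two_le_n by simp
  from valid_profile_strat[OF assms(1) nth_orders_less[OF assms(2) this]] show ?thesis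
    by (simp add: valid_strat_def outcome_opt_def)
qed

definition price_stage_SPE :: "(nat \<Rightarrow> 'a strat) \<Rightarrow> (nat \<Rightarrow> real) \<Rightarrow> nat list \<Rightarrow> bool" where
  "price_stage_SPE \<sigma> b \<pi> \<longleftrightarrow> (\<forall>ps. set ps \<subseteq> Pset A \<and> length ps \<le> n - 1 \<longrightarrow>
     (\<forall>i<n. \<forall>s. valid_strat A s \<longrightarrow> cont_payoff n u (\<sigma>(i := s)) b \<pi> ps i \<le> cont_payoff n u \<sigma> b \<pi> ps i))"

lemma price_stage_SPE_D:
  assumes "price_stage_SPE \<sigma> b \<pi>" "set ps \<subseteq> Pset A" "length ps \<le> n - 1" "i < n" "valid_strat A s"
  shows "cont_payoff n u (\<sigma>(i := s)) b \<pi> ps i \<le> cont_payoff n u \<sigma> b \<pi> ps i"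
  using assms unfolding price_stage_SPE_def by blast

lemma mover_gain_le:
  assumes q: "q \<in> Pset A" and x: "x \<in> A" and L: "L < n"
    and x_max: "\<forall>y\<in>A. tail_utility \<pi> (Suc L) y - q y \<le> tail_utility \<pi> (Suc L) x - q x"
  shows "u (\<pi> ! L) x + q x \<le> tail_utility \<pi> L x - tail_avg \<pi> (Suc L)"
  using Pset_le_at_argmax[OF finite_A q x x_max] tail_utility_Suc[OF L]
  by (simp add: tail_avg_eq_mean)

text \<open>The objective of the mover at position L after the prices ps is his own and his successors'
  joint utility net of the price he pays.  Backward induction predicts that the outcome maximises it,
  that he obtains its maximum minus his successors' average utility, and that he posts the price
  which makes his successor's objective constant on A.\<close>

definition subgame_solution ::
  "(nat \<Rightarrow> 'a strat) \<Rightarrow> (nat \<Rightarrow> real) \<Rightarrow> nat list \<Rightarrow> ('a \<Rightarrow> real) list \<Rightarrow> bool" where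
  "subgame_solution \<sigma> b \<pi> ps \<longleftrightarrow>
    (\<forall>y\<in>A. tail_utility \<pi> (length ps) y - last_price ps y
       \<le> tail_utility \<pi> (length ps) (outcome_opt n \<sigma> b \<pi> ps) - last_price ps (outcome_opt n \<sigma> b \<pi> ps))
    \<and> cont_payoff n u \<sigma> b \<pi> ps (\<pi> ! length ps) =
        tail_utility \<pi> (length ps) (outcome_opt n \<sigma> b \<pi> ps) - last_price ps (outcome_opt n \<sigma> b \<pi> ps)
        - tail_avg \<pi> (Suc (length ps)) + bid_transfer n b \<pi> (\<pi> ! length ps)
    \<and> (length ps < n - 1 \<longrightarrow>
        spr (\<sigma> (\<pi> ! length ps)) b \<pi> ps = centered A (tail_utility \<pi> (Suc (length ps))))"

lemma subgame_solution_last: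
  assumes SG: "price_stage_SPE \<sigma> b \<pi>" and vp: "valid_profile n A \<sigma>" and \<pi>: "\<pi> \<in> orders n"
    and ps: "set ps \<subseteq> Pset A" "length ps = n - 1"
  shows "subgame_solution \<sigma> b \<pi> ps"
proof -
  let ?i = "\<pi> ! (n - 1)"
  have i: "?i < n" using nth_orders_less[OF \<pi>] two_le_n by simp
  have L: "length ps < n" using ps(2) two_le_n by simp
  have payoff: "cont_payoff n u \<sigma>' b \<pi> ps ?i =
      u ?i (outcome_opt n \<sigma>' b \<pi> ps) - last_price ps (outcome_opt n \<sigma>' b \<pi> ps) + bid_transfer n b \<pi> ?i"
    for \<sigma>' using cont_payoff_mover[OF \<pi> L, of u \<sigma>' b] ps(2) by simp
  have tail: "tail_utility \<pi> (n - 1) x = u ?i x" for x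
    using tail_utility_Suc[of "n - 1" \<pi> x] two_le_n by simp
  have "u ?i y - last_price ps y \<le> u ?i (outcome_opt n \<sigma> b \<pi> ps) - last_price ps (outcome_opt n \<sigma> b \<pi> ps)"
    if y: "y \<in> A" for y
  proof -
    define s where "s = (\<sigma> ?i)\<lparr>sch := (\<lambda>_ _ _. y)\<rparr>"
    have "valid_strat A s" using valid_profile_strat[OF vp i] y by (simp add: s_def valid_strat_def)
    then have "cont_payoff n u (\<sigma>(?i := s)) b \<pi> ps ?i \<le> cont_payoff n u \<sigma> b \<pi> ps ?i"
      using price_stage_SPE_D[OF SG ps(1)] ps(2) i by simp
    moreover have "outcome_opt n (\<sigma>(?i := s)) b \<pi> ps = y"
      by (simp add: outcome_opt_def s_def)
    ultimately show ?thesis using payoff by simp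
  qed
  moreover have "Suc (n - 1) = n" using two_le_n by simp
  ultimately show ?thesis
    unfolding subgame_solution_def ps(2) tail payoff[of \<sigma>] by simp
qed

text \<open>By posting the fair price tilted by e against an option a, the mover makes a the unique
  maximiser of his successor's objective, so he gets his own objective at a up to e.\<close>

lemma mover_secures:
  assumes SG: "price_stage_SPE \<sigma> b \<pi>" and vp: "valid_profile n A \<sigma>" and \<pi>: "\<pi> \<in> orders n"
    and ps: "set ps \<subseteq> Pset A" "length ps < n - 1"
    and next_solved: "\<And>q. q \<in> Pset A \<Longrightarrow> subgame_solution \<sigma> b \<pi> (ps @ [q])"
    and a: "a \<in> A" and e: "0 < e"
  shows "tail_utility \<pi> (length ps) a - last_price ps a - tail_avg \<pi> (Suc (length ps))
      + bid_transfer n b \<pi> (\<pi> ! length ps) - e \<le> cont_payoff n u \<sigma> b \<pi> ps (\<pi> ! length ps)"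
proof -
  let ?L = "length ps" and ?bt = "bid_transfer n b \<pi> (\<pi> ! length ps)"
  have i: "\<pi> ! ?L < n" using nth_orders_less[OF \<pi>] ps(2) by simp
  define f where "f x = tail_utility \<pi> (Suc ?L) x - (if x = a then e else 0)" for x
  define q where "q = centered A f"
  define s where "s = (\<sigma> (\<pi> ! ?L))\<lparr>spr := (\<lambda>_ _ _. q)\<rparr>"
  let ?x = "outcome_opt n \<sigma> b \<pi> (ps @ [q])"
  have q: "q \<in> Pset A" unfolding q_def by (rule centered_in_Pset[OF finite_A])
  have mean_f: "(\<Sum>x\<in>A. f x) / card A = tail_avg \<pi> (Suc ?L) - e / card A"
    using a finite_A card_A_pos
    by (simp add: f_def tail_avg_eq_mean sum_subtractf diff_divide_distrib)
  have objective: "tail_utility \<pi> (Suc ?L) y - q y = (\<Sum>x\<in>A. f x) / card A + (if y = a then e else 0)"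
    if "y \<in> A" for y
    using diff_centered[OF that, of f] by (simp add: q_def f_def)
  have "tail_utility \<pi> (Suc ?L) a - q a \<le> tail_utility \<pi> (Suc ?L) ?x - q ?x"
    using next_solved[OF q] a unfolding subgame_solution_def by simp
  then have x: "?x = a"
    using objective[OF a] objective[OF outcome_opt_in_A[OF vp \<pi>]] e by (auto split: if_splits)
  have "valid_strat A s" using valid_profile_strat[OF vp i] q by (simp add: s_def valid_strat_def)
  then have "cont_payoff n u (\<sigma>(\<pi> ! ?L := s)) b \<pi> ps (\<pi> ! ?L) \<le> cont_payoff n u \<sigma> b \<pi> ps (\<pi> ! ?L)"
    using price_stage_SPE_D[OF SG ps(1)] ps(2) i by simp
  moreover have "cont_payoff n u (\<sigma>(\<pi> ! ?L := s)) b \<pi> ps (\<pi> ! ?L) =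
      u (\<pi> ! ?L) a - last_price ps a + q a + ?bt"
    using cont_payoff_deviate_mover[OF \<pi> ps(2), of u \<sigma> s b]
      cont_payoff_previous_mover[OF \<pi> ps(2), of u \<sigma> b q] x
    by (simp add: s_def)
  moreover have "q a = tail_utility \<pi> (Suc ?L) a - tail_avg \<pi> (Suc ?L) - e + e / card A"
    using objective[OF a] mean_f by simp
  moreover have "0 \<le> e / card A" using e by simp
  ultimately show ?thesis using tail_utility_Suc[of ?L \<pi> a] ps(2) by simp
qed

lemma subgame_solution_step:
  assumes SG: "price_stage_SPE \<sigma> b \<pi>" and vp: "valid_profile n A \<sigma>" and \<pi>: "\<pi> \<in> orders n"
    and ps: "set ps \<subseteq> Pset A" "length ps < n - 1"
    and next_solved: "\<And>q. q \<in> Pset A \<Longrightarrow> subgame_solution \<sigma> b \<pi> (ps @ [q])"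
  shows "subgame_solution \<sigma> b \<pi> ps"
proof -
  let ?L = "length ps" and ?bt = "bid_transfer n b \<pi> (\<pi> ! length ps)"
  let ?x = "outcome_opt n \<sigma> b \<pi> ps"
  let ?obj = "\<lambda>y. tail_utility \<pi> ?L y - last_price ps y"
  define q where "q = spr (\<sigma> (\<pi> ! ?L)) b \<pi> ps"
  have q: "q \<in> Pset A" unfolding q_def using spr_in_Pset[OF vp \<pi>] ps(2) by simp
  have xA: "?x \<in> A" by (rule outcome_opt_in_A[OF vp \<pi>])
  have "outcome_opt n \<sigma> b \<pi> (ps @ [q]) = ?x"
    unfolding q_def by (rule outcome_opt_snoc[OF ps(2)])
  then have x_max: "\<forall>y\<in>A. tail_utility \<pi> (Suc ?L) y - q y \<le> tail_utility \<pi> (Suc ?L) ?x - q ?x"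
    using next_solved[OF q] unfolding subgame_solution_def by simp
  have payoff: "cont_payoff n u \<sigma> b \<pi> ps (\<pi> ! ?L) = u (\<pi> ! ?L) ?x - last_price ps ?x + q ?x + ?bt"
    using cont_payoff_mover[OF \<pi>, of ps u \<sigma> b] ps(2) by (simp add: q_def)
  obtain a where a: "a \<in> A" and a_max: "\<And>y. y \<in> A \<Longrightarrow> ?obj y \<le> ?obj a"
    using arg_max_on_finite[OF finite_A A_nonempty, where f = ?obj] by blast
  have split: "tail_utility \<pi> ?L ?x = u (\<pi> ! ?L) ?x + tail_utility \<pi> (Suc ?L) ?x"
    using tail_utility_Suc ps(2) by simp
  have upper: "cont_payoff n u \<sigma> b \<pi> ps (\<pi> ! ?L) \<le> ?obj ?x - tail_avg \<pi> (Suc ?L) + ?bt"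
    using payoff mover_gain_le[OF q xA _ x_max] ps(2) by simp
  have lower: "?obj a - tail_avg \<pi> (Suc ?L) + ?bt \<le> cont_payoff n u \<sigma> b \<pi> ps (\<pi> ! ?L)"
  proof (rule field_le_epsilon)
    fix e :: real assume "0 < e"
    from mover_secures[OF SG vp \<pi> ps next_solved a this]
    show "?obj a - tail_avg \<pi> (Suc ?L) + ?bt \<le> cont_payoff n u \<sigma> b \<pi> ps (\<pi> ! ?L) + e"
      by linarith
  qed
  have x_obj: "?obj ?x = ?obj a"
    using upper lower a_max[OF xA] by linarith
  have "q ?x = tail_utility \<pi> (Suc ?L) ?x - tail_avg \<pi> (Suc ?L)"
    using upper lower payoff x_obj split by linarith
  then have "q = centered A (tail_utility \<pi> (Suc ?L))"
    using Pset_eq_centered_at_argmax[OF finite_A q xA x_max] by (simp add: tail_avg_eq_mean)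
  moreover have "\<forall>y\<in>A. ?obj y \<le> ?obj ?x" using a_max x_obj by simp
  moreover have "cont_payoff n u \<sigma> b \<pi> ps (\<pi> ! ?L) = ?obj ?x - tail_avg \<pi> (Suc ?L) + ?bt"
    using upper lower x_obj by linarith
  ultimately show ?thesis
    unfolding subgame_solution_def q_def by simp
qed

lemma subgame_solution_backward_induction:
  assumes SG: "price_stage_SPE \<sigma> b \<pi>" and vp: "valid_profile n A \<sigma>" and \<pi>: "\<pi> \<in> orders n"
    and "set ps \<subseteq> Pset A" "length ps \<le> n - 1"
  shows "subgame_solution \<sigma> b \<pi> ps"
  using assms(4,5)
proof (induction "n - 1 - length ps" arbitrary: ps)
  case 0
  then show ?case using subgame_solution_last[OF SG vp \<pi>] by simp
next
  case (Suc k)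
  show ?case
  proof (rule subgame_solution_step[OF SG vp \<pi> Suc.prems(1)])
    show "length ps < n - 1" using Suc.hyps(2) by simp
    show "subgame_solution \<sigma> b \<pi> (ps @ [q])" if "q \<in> Pset A" for q
      using Suc.hyps Suc.prems that by (intro Suc.hyps(1)) auto
  qed
qed

subsection \<open>Equilibrium payoffs after the bids\<close>

definition max_welfare :: real where
  "max_welfare = Max ((\<lambda>x. \<Sum>i<n. u i x) ` A)"

definition surplus :: real where
  "surplus = max_welfare - (\<Sum>i<n. avg A u i)"

definition top_bid :: "(nat \<Rightarrow> real) \<Rightarrow> real" where
  "top_bid b = Max (b ` {..<n})"

lemma finite_winners: "finite (winners n b)"
  by (simp add: winners_def)

lemma winners_nonempty: "winners n b \<noteq> {}"
proof -
  have "{..<n} \<noteq> {}" using two_le_n by (simp add: lessThan_empty_iff)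
  then have "Max (b ` {..<n}) \<in> b ` {..<n}" by (intro Max_in) auto
  then show ?thesis by (auto simp: winners_def)
qed

text \<open>Expected payoff after the bids b in any equilibrium of the price stages: a highest bidder
  becomes the first mover, and thus collects the surplus, with probability 1 / card (winners n b).\<close>

definition chance_value :: "(nat \<Rightarrow> real) \<Rightarrow> nat \<Rightarrow> real" where
  "chance_value b i = avg A u i + (if i \<in> winners n b
      then (surplus - top_bid b + (card (winners n b) - 1) * (top_bid b / (n - 1))) / card (winners n b)
      else top_bid b / (n - 1))"

lemma efficient_iff_max_welfare: "efficient n A u x \<longleftrightarrow> x \<in> A \<and> (\<Sum>i<n. u i x) = max_welfare"
  unfolding efficient_def max_welfare_def using finite_A
  by (auto intro!: antisym Max_ge Max.boundedI)

lemma surplus_nonneg: "0 \<le> surplus"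
proof -
  have "(\<Sum>i<n. avg A u i) = (\<Sum>x\<in>A. \<Sum>i<n. u i x) / card A"
    unfolding avg_def by (subst sum.swap) (simp add: sum_divide_distrib)
  also have "\<dots> \<le> real (card A) * max_welfare / card A"
    unfolding max_welfare_def using finite_A
    by (intro divide_right_mono sum_bounded_above) auto
  finally show ?thesis using card_A_pos by (simp add: surplus_def)
qed

lemma outcome_opt_efficient:
  assumes SG: "price_stage_SPE \<sigma> b \<pi>" and vp: "valid_profile n A \<sigma>" and \<pi>: "\<pi> \<in> orders n"
  shows "efficient n A u (outcome_opt n \<sigma> b \<pi> [])"
proof -
  have "subgame_solution \<sigma> b \<pi> []"
    using subgame_solution_backward_induction[OF SG vp \<pi>] by simp
  then show ?thesis
    unfolding subgame_solution_def efficient_def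
    using outcome_opt_in_A[OF vp \<pi>] by (simp add: last_price_def tail_utility_0[OF \<pi>])
qed

lemma subgame_solution_on_path:
  assumes SG: "price_stage_SPE \<sigma> b \<pi>" and vp: "valid_profile n A \<sigma>" and \<pi>: "\<pi> \<in> orders n"
    and m: "m \<le> n - 1"
  shows "subgame_solution \<sigma> b \<pi> (ext_prices \<sigma> b \<pi> m [])"
proof (rule subgame_solution_backward_induction[OF SG vp \<pi>])
  show "set (ext_prices \<sigma> b \<pi> m []) \<subseteq> Pset A"
    by (rule set_ext_prices_subset) (use spr_in_Pset[OF vp \<pi>] m in auto)
qed (use m in simp)

lemma on_path_payoff:
  assumes SG: "price_stage_SPE \<sigma> b \<pi>" and vp: "valid_profile n A \<sigma>" and \<pi>: "\<pi> \<in> orders n"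
    and m: "m < n"
  shows "cont_payoff n u \<sigma> b \<pi> [] (\<pi> ! m) =
    (if m = 0 then surplus + avg A u (\<pi> ! 0) else avg A u (\<pi> ! m)) + bid_transfer n b \<pi> (\<pi> ! m)"
proof -
  let ?x = "outcome_opt n \<sigma> b \<pi> []"
  define h where "h m' = ext_prices \<sigma> b \<pi> m' []" for m'
  have x: "outcome_opt n \<sigma> b \<pi> (h m) = ?x"
    using outcome_opt_ext_prices[of "[]" m n \<sigma> b \<pi>] m by (simp add: h_def)
  have "cont_payoff n u \<sigma> b \<pi> [] (\<pi> ! m) = cont_payoff n u \<sigma> b \<pi> (h m) (\<pi> ! m)"
    using cont_payoff_ext_prices[of "[]" m n u \<sigma> b \<pi>] m by (simp add: h_def)
  also have "\<dots> = tail_utility \<pi> m ?x - last_price (h m) ?x - tail_avg \<pi> (Suc m)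
      + bid_transfer n b \<pi> (\<pi> ! m)"
    using subgame_solution_on_path[OF SG vp \<pi>, of m] m x
    unfolding subgame_solution_def by (simp add: h_def)
  also have "tail_utility \<pi> m ?x - last_price (h m) ?x - tail_avg \<pi> (Suc m) =
    (if m = 0 then surplus + avg A u (\<pi> ! 0) else avg A u (\<pi> ! m))"
  proof (cases "m = 0")
    case True
    have "tail_utility \<pi> 0 ?x = max_welfare"
      using outcome_opt_efficient[OF SG vp \<pi>] tail_utility_0[OF \<pi>] by (simp add: efficient_iff_max_welfare)
    moreover have "tail_avg \<pi> 0 = avg A u (\<pi> ! 0) + tail_avg \<pi> (Suc 0)"
      using tail_avg_Suc m by simp
    ultimately show ?thesis
      using True tail_avg_0[OF \<pi>] by (simp add: h_def last_price_def surplus_def)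
  next
    case False
    then have "h m = h (m - 1) @ [spr (\<sigma> (\<pi> ! (m - 1))) b \<pi> (h (m - 1))]"
      using ext_prices_Suc[of \<sigma> b \<pi> "m - 1" "[]"] by (simp add: h_def)
    moreover have "spr (\<sigma> (\<pi> ! (m - 1))) b \<pi> (h (m - 1)) = centered A (tail_utility \<pi> m)"
      using subgame_solution_on_path[OF SG vp \<pi>, of "m - 1"] False m
      unfolding subgame_solution_def by (simp add: h_def)
    ultimately have "tail_utility \<pi> m ?x - last_price (h m) ?x = tail_avg \<pi> m"
      using diff_centered[OF outcome_opt_in_A[OF vp \<pi>]] by (simp add: tail_avg_eq_mean)
    then show ?thesis using False tail_avg_Suc[OF m] by simp
  qed
  finally show ?thesis .
qed

lemma cont_payoff_on_path:
  assumes SG: "price_stage_SPE \<sigma> b \<pi>" and vp: "valid_profile n A \<sigma>" and \<pi>: "\<pi> \<in> orders_W n b"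
    and i: "i < n"
  shows "cont_payoff n u \<sigma> b \<pi> [] i =
    avg A u i + (if i = hd \<pi> then surplus - top_bid b else top_bid b / (n - 1))"
proof -
  have \<pi>': "\<pi> \<in> orders n" and top: "b (hd \<pi>) = top_bid b"
    using \<pi> by (auto simp: orders_W_def winners_def top_bid_def)
  obtain m where m: "m < n" "\<pi> ! m = i" using orders_obtain_position[OF \<pi>' i] .
  have "i = hd \<pi> \<longleftrightarrow> m = 0"
    using nth_orders_eq_iff[OF \<pi>' m(1), of 0] m hd_orders[OF \<pi>'] by auto
  then show ?thesis
    using on_path_payoff[OF SG vp \<pi>' m(1)] m hd_orders[OF \<pi>'] top
    by (auto simp: bid_transfer_def)
qed

lemma exp_payoff_eq_chance_value:
  assumes SG: "\<And>\<pi>. \<pi> \<in> orders_W n b \<Longrightarrow> price_stage_SPE \<sigma> b \<pi>" and vp: "valid_profile n A \<sigma>"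
    and i: "i < n"
  shows "exp_payoff n u \<sigma> b i = chance_value b i"
proof -
  let ?W = "winners n b"
  have W: "finite ?W" "?W \<noteq> {}" by (rule finite_winners, rule winners_nonempty)
  define g where "g j = avg A u i + (if i = j then surplus - top_bid b else top_bid b / (n - 1))" for j
  have n: "0 < n" using two_le_n by simp
  have "exp_payoff n u \<sigma> b i = (\<Sum>\<pi>\<in>orders_W n b. g (hd \<pi>)) / card (orders_W n b)"
    unfolding exp_payoff_def g_def using cont_payoff_on_path[OF SG vp _ i] by simp
  also have "\<dots> = (\<Sum>j\<in>?W. g j) / card ?W"
    using sum_orders_W_hd[OF n, where b = b and g = g] sum_orders_W_hd[OF n, where b = b and g = "\<lambda>_. 1"]
    by simp
  also have "\<dots> = chance_value b i"
  proof (cases "i \<in> ?W")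
    case True
    have "(\<Sum>j\<in>?W. g j) = g i + (\<Sum>j\<in>?W - {i}. avg A u i + top_bid b / (n - 1))"
      using True W by (simp add: sum.remove g_def)
    also have "\<dots> = card ?W * avg A u i
        + (surplus - top_bid b + (card ?W - 1) * (top_bid b / (n - 1)))"
    proof -
      have "card ?W = Suc (card (?W - {i}))" using card_Suc_Diff1[OF W(1) True] by simp
      then show ?thesis by (simp add: g_def algebra_simps add_divide_distrib)
    qed
    finally show ?thesis
      using True W by (simp add: chance_value_def card_gt_0_iff field_simps)
  next
    case False
    then have "(\<Sum>j\<in>?W. g j) = (\<Sum>j\<in>?W. avg A u i + top_bid b / (n - 1))"
      by (intro sum.cong) (auto simp: g_def)
    then show ?thesis using False W by (simp add: chance_value_def card_gt_0_iff)
  qed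
  finally show ?thesis .
qed

subsection \<open>The bidding stage\<close>

definition top_other_bid :: "(nat \<Rightarrow> real) \<Rightarrow> nat \<Rightarrow> real" where
  "top_other_bid b i = Max (b ` ({..<n} - {i}))"

lemma others_nonempty: "i < n \<Longrightarrow> {..<n} - {i} \<noteq> {}"
proof -
  assume "i < n"
  then have "(if i = 0 then 1 else 0) \<in> {..<n} - {i}" using two_le_n by auto
  then show ?thesis by blast
qed

lemma top_other_bid_ge: "i < n \<Longrightarrow> j < n \<Longrightarrow> j \<noteq> i \<Longrightarrow> b j \<le> top_other_bid b i"
  unfolding top_other_bid_def by (intro Max_ge) auto

lemma top_other_bid_obtain:
  assumes "i < n"
  obtains j where "j < n" "j \<noteq> i" "b j = top_other_bid b i"
proof -
  have "top_other_bid b i \<in> b ` ({..<n} - {i})"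
    unfolding top_other_bid_def using others_nonempty[OF assms] by (intro Max_in) auto
  then obtain j where "j < n" "j \<noteq> i" "top_other_bid b i = b j" by blast
  then show thesis using that by simp
qed

lemma top_bid_ge: "j < n \<Longrightarrow> b j \<le> top_bid b"
  unfolding top_bid_def by (intro Max_ge) auto

lemma top_bid_fun_upd: "i < n \<Longrightarrow> top_bid (b(i := \<beta>)) = max \<beta> (top_other_bid b i)"
proof -
  assume i: "i < n"
  then have "(b(i := \<beta>)) ` {..<n} = insert \<beta> (b ` ({..<n} - {i}))" by auto
  then show ?thesis
    unfolding top_bid_def top_other_bid_def using others_nonempty[OF i] by simp
qed

lemma chance_value_upd_above:
  assumes i: "i < n" and \<beta>: "top_other_bid b i < \<beta>"
  shows "chance_value (b(i := \<beta>)) i = avg A u i + (surplus - \<beta>)"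
proof -
  have top: "top_bid (b(i := \<beta>)) = \<beta>" using top_bid_fun_upd[OF i] \<beta> by simp
  have "winners n (b(i := \<beta>)) = {i}"
    using i top top_other_bid_ge[OF i, of _ b] \<beta> by (force simp: winners_def top_bid_def)
  then show ?thesis using top by (simp add: chance_value_def)
qed

lemma chance_value_upd_below:
  assumes i: "i < n" and \<beta>: "\<beta> < top_other_bid b i"
  shows "chance_value (b(i := \<beta>)) i = avg A u i + top_other_bid b i / (n - 1)"
proof -
  have top: "top_bid (b(i := \<beta>)) = top_other_bid b i" using top_bid_fun_upd[OF i] \<beta> by simp
  then have "i \<notin> winners n (b(i := \<beta>))" using \<beta> by (simp add: winners_def top_bid_def)
  then show ?thesis using top by (simp add: chance_value_def)
qed

definition bid_equilibrium :: "(nat \<Rightarrow> real) \<Rightarrow> bool" where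
  "bid_equilibrium b \<longleftrightarrow> valid_bids n b \<and> (\<forall>i<n. \<forall>\<beta>\<ge>0. chance_value (b(i := \<beta>)) i \<le> chance_value b i)"

text \<open>A sole highest bidder could shade his bid towards the second highest one.\<close>

lemma bid_equilibrium_two_winners:
  assumes eq: "bid_equilibrium b"
  shows "2 \<le> card (winners n b)"
proof (rule ccontr)
  assume "\<not> 2 \<le> card (winners n b)"
  moreover have "0 < card (winners n b)"
    using finite_winners winners_nonempty by (simp add: card_gt_0_iff)
  ultimately have "card (winners n b) = 1" by simp
  then obtain i where W: "winners n b = {i}" by (rule card_1_singletonE)
  then have i: "i < n" "b i = top_bid b" by (auto simp: winners_def top_bid_def)
  obtain j where j: "j < n" "j \<noteq> i" "b j = top_other_bid b i" using top_other_bid_obtain[OF i(1)] .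
  have "j \<notin> winners n b" using W j(2) by simp
  then have less: "top_other_bid b i < b i"
    using j top_bid_ge[OF j(1), of b] i by (simp add: winners_def top_bid_def)
  define \<beta> where "\<beta> = (top_other_bid b i + b i) / 2"
  have "0 \<le> top_other_bid b i" using eq j unfolding bid_equilibrium_def valid_bids_def by metis
  then have \<beta>: "0 \<le> \<beta>" "top_other_bid b i < \<beta>" "\<beta> < b i" using less by (simp_all add: \<beta>_def)
  have "chance_value (b(i := \<beta>)) i \<le> chance_value b i"
    using eq i(1) \<beta>(1) unfolding bid_equilibrium_def by blast
  moreover have "chance_value b i = avg A u i + (surplus - b i)"
    using chance_value_upd_above[OF i(1) less] by simp
  ultimately show False using chance_value_upd_above[OF i(1) \<beta>(2)] \<beta>(3) by simp
qed

lemma top_other_bid_tie: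
  assumes "i \<in> winners n b" "2 \<le> card (winners n b)"
  shows "top_other_bid b i = top_bid b"
proof -
  have i: "i < n" using assms(1) by (simp add: winners_def)
  have "winners n b - {i} \<noteq> {}"
  proof
    assume "winners n b - {i} = {}"
    then have "card (winners n b) \<le> card {i}" by (intro card_mono) auto
    then show False using assms(2) by simp
  qed
  then obtain j where "j \<in> winners n b" "j \<noteq> i" by blast
  then have "top_bid b \<le> top_other_bid b i"
    using top_other_bid_ge[OF i, of j b] by (simp add: winners_def top_bid_def)
  moreover obtain k where "k < n" "b k = top_other_bid b i" using top_other_bid_obtain[OF i] .
  then have "top_other_bid b i \<le> top_bid b" using top_bid_ge by metis
  ultimately show ?thesis by simp
qed

text \<open>A tied highest bidder can become the sole first mover by overbidding slightly, and can
  drop out by bidding 0.\<close>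

lemma bid_equilibrium_winner_bounds:
  assumes eq: "bid_equilibrium b" and W: "i \<in> winners n b"
  shows "surplus - top_bid b \<le> chance_value b i - avg A u i"
    and "top_bid b / (n - 1) \<le> chance_value b i - avg A u i"
proof -
  let ?B = "top_bid b"
  have i: "i < n" using W by (simp add: winners_def)
  have dev: "chance_value (b(i := \<beta>)) i \<le> chance_value b i" if "0 \<le> \<beta>" for \<beta>
    using eq i that unfolding bid_equilibrium_def by blast
  have other: "top_other_bid b i = ?B"
    using top_other_bid_tie[OF W bid_equilibrium_two_winners[OF eq]] .
  have "0 \<le> b i" using eq i unfolding bid_equilibrium_def valid_bids_def by blast
  then have B_nonneg: "0 \<le> ?B" using top_bid_ge[OF i, of b] by simp
  show "surplus - ?B \<le> chance_value b i - avg A u i"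
  proof (rule field_le_epsilon)
    fix e :: real assume e: "0 < e"
    have "chance_value (b(i := ?B + e)) i = avg A u i + (surplus - (?B + e))"
      by (rule chance_value_upd_above[OF i]) (use other e in simp)
    then show "surplus - ?B \<le> chance_value b i - avg A u i + e"
      using dev[of "?B + e"] B_nonneg e by simp
  qed
  show "?B / (n - 1) \<le> chance_value b i - avg A u i"
  proof (cases "?B = 0")
    case True
    have "0 \<le> surplus / card (winners n b)" using surplus_nonneg by simp
    then show ?thesis using True W by (simp add: chance_value_def)
  next
    case False
    then have "chance_value (b(i := 0)) i = avg A u i + ?B / (n - 1)"
      using chance_value_upd_below[OF i, of 0 b] other B_nonneg by simp
    then show ?thesis using dev[of 0] by simp
  qed
qed

text \<open>Applied to the share P of a tied highest bidder among w winners: d is what he would get as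
  the sole first mover, c what he would get by dropping out.\<close>

lemma winner_share_eq:
  fixes w P c d :: real
  assumes "2 \<le> w" "d \<le> P" "c \<le> P" "w * P = d + (w - 1) * c"
  shows "P = c"
proof -
  have wd: "w * d \<le> w * P" and wc: "w * c \<le> w * P"
    using mult_left_mono[OF assms(2)] mult_left_mono[OF assms(3)] assms(1) by simp_all
  have "(w - 1) * d \<le> (w - 1) * c" using wd assms(4) unfolding left_diff_distrib by linarith
  then have "d \<le> c" using assms(1) by simp
  then have "w * P = w * c" using wc assms(4) unfolding left_diff_distrib by linarith
  then show ?thesis using assms(1) by simp
qed

lemma bid_equilibrium_value:
  assumes eq: "bid_equilibrium b" and i: "i < n"
  shows "chance_value b i = avg A u i + top_bid b / (n - 1)"
proof (cases "i \<in> winners n b")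
  case True
  let ?B = "top_bid b" and ?w = "card (winners n b)" and ?P = "chance_value b i - avg A u i"
  have two: "2 \<le> ?w" by (rule bid_equilibrium_two_winners[OF eq])
  then have "real ?w \<noteq> 0" "real (?w - 1) = real ?w - 1" by (simp_all add: of_nat_diff)
  then have "real ?w * ?P = surplus - ?B + (real ?w - 1) * (?B / (n - 1))"
    using True by (simp add: chance_value_def)
  moreover have "2 \<le> real ?w" using two by simp
  ultimately have "?P = ?B / (n - 1)"
    using winner_share_eq bid_equilibrium_winner_bounds[OF eq True] by blast
  then show ?thesis by simp
next
  case False
  then show ?thesis by (simp add: chance_value_def)
qed

lemma SPE_valid_profile: "SPE n A u \<sigma> \<Longrightarrow> valid_profile n A \<sigma>"
  by (simp add: SPE_def)

lemma SPE_price_stage_SPE: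
  assumes "SPE n A u \<sigma>" "valid_bids n b" "\<pi> \<in> orders_W n b"
  shows "price_stage_SPE \<sigma> b \<pi>"
  unfolding price_stage_SPE_def
proof (intro allI impI)
  fix ps i s assume "set ps \<subseteq> Pset A \<and> length ps \<le> n - 1" "i < n" "valid_strat A s"
  with assms show "cont_payoff n u (\<sigma>(i := s)) b \<pi> ps i \<le> cont_payoff n u \<sigma> b \<pi> ps i"
    unfolding SPE_def by blast
qed

lemma valid_bids_of: "valid_profile n A \<sigma> \<Longrightarrow> valid_bids n (bids_of n \<sigma>)"
  by (simp add: valid_bids_def bids_of_def valid_profile_def valid_strat_def)

lemma SPE_chance_value:
  assumes "SPE n A u \<sigma>" "valid_bids n b" "i < n"
  shows "exp_payoff n u \<sigma> b i = chance_value b i"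
  using assms SPE_price_stage_SPE SPE_valid_profile by (intro exp_payoff_eq_chance_value) auto

lemma SPE_bid_equilibrium:
  assumes spe: "SPE n A u \<sigma>"
  shows "bid_equilibrium (bids_of n \<sigma>)"
  unfolding bid_equilibrium_def
proof (intro conjI allI impI)
  let ?b = "bids_of n \<sigma>"
  have vp: "valid_profile n A \<sigma>" by (rule SPE_valid_profile[OF spe])
  show vb: "valid_bids n ?b" by (rule valid_bids_of[OF vp])
  fix i :: nat and \<beta> :: real assume i: "i < n" and \<beta>: "0 \<le> \<beta>"
  define s where "s = (\<sigma> i)\<lparr>sbid := \<beta>\<rparr>"
  have "valid_strat A s" using valid_profile_strat[OF vp i] \<beta> by (simp add: s_def valid_strat_def)
  then have "root_payoff n u (\<sigma>(i := s)) i \<le> root_payoff n u \<sigma> i"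
    using spe i unfolding SPE_def by blast
  moreover have "bids_of n (\<sigma>(i := s)) = ?b(i := \<beta>)"
    using i by (auto simp: bids_of_def s_def)
  moreover have "exp_payoff n u (\<sigma>(i := s)) = exp_payoff n u \<sigma>"
    by (rule exp_payoff_cong) (simp_all add: s_def)
  moreover have "valid_bids n (?b(i := \<beta>))" using vb \<beta> i by (simp add: valid_bids_def)
  ultimately show "chance_value (?b(i := \<beta>)) i \<le> chance_value ?b i"
    using SPE_chance_value[OF spe _ i] vb by (simp add: root_payoff_def)
qed

lemma SPE_root_payoff:
  assumes "SPE n A u \<sigma>" "i < n"
  shows "root_payoff n u \<sigma> i = avg A u i + top_bid (bids_of n \<sigma>) / (n - 1)"
  using assms SPE_chance_value[OF assms(1) valid_bids_of[OF SPE_valid_profile[OF assms(1)]]]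
    bid_equilibrium_value[OF SPE_bid_equilibrium[OF assms(1)]]
  by (simp add: root_payoff_def)

lemma SPE_realized_efficient:
  assumes "SPE n A u \<sigma>" "\<pi> \<in> orders_W n (bids_of n \<sigma>)"
  shows "efficient n A u (realized n \<sigma> \<pi>)"
  unfolding realized_def
  using assms SPE_price_stage_SPE valid_bids_of SPE_valid_profile
  by (intro outcome_opt_efficient) (auto simp: orders_W_def)

subsection \<open>An equilibrium implementing a given efficient option\<close>

text \<open>The bid at which the first mover's surplus net of his bid equals every other player's share
  of it.\<close>

definition equilibrium_bid :: real where
  "equilibrium_bid = (n - 1) * surplus / n"

lemma uniform_bid_equilibrium: "bid_equilibrium (\<lambda>j. if j < n then equilibrium_bid else 0)"
  unfolding bid_equilibrium_def
proof (intro conjI allI impI)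
  let ?b = "\<lambda>j. if j < n then equilibrium_bid else 0"
  have n: "real n \<noteq> 0" "real (n - 1) \<noteq> 0" "real (n - 1) = real n - 1" using two_le_n by auto
  have B: "surplus - equilibrium_bid = surplus / n" "equilibrium_bid / (n - 1) = surplus / n"
    using n by (simp_all add: equilibrium_bid_def field_simps)
  show "valid_bids n ?b"
    using surplus_nonneg two_le_n by (simp add: valid_bids_def equilibrium_bid_def)
  fix i :: nat and \<beta> :: real assume i: "i < n" and "0 \<le> \<beta>"
  have other: "top_other_bid ?b i = equilibrium_bid"
    unfolding top_other_bid_def using others_nonempty[OF i] by simp
  have "?b(i := equilibrium_bid) = ?b" using i by auto
  then have top: "top_bid ?b = equilibrium_bid"
    using top_bid_fun_upd[OF i, of ?b equilibrium_bid] other by simp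
  have "winners n ?b = {..<n}" using top by (auto simp: winners_def top_bid_def)
  then have "chance_value ?b i = avg A u i + surplus / n"
    using i top n B by (simp add: chance_value_def field_simps)
  then show "chance_value (?b(i := \<beta>)) i \<le> chance_value ?b i"
  proof (cases \<beta> equilibrium_bid rule: linorder_cases)
    case equal
    then show ?thesis using \<open>?b(i := equilibrium_bid) = ?b\<close> by simp
  qed (use chance_value_upd_below[OF i, of \<beta> ?b] chance_value_upd_above[OF i, of ?b \<beta>] other B in simp_all)
qed

definition deviations :: "nat list \<Rightarrow> ('a \<Rightarrow> real) list \<Rightarrow> nat set" where
  "deviations \<pi> ps = {j. j < length ps \<and> ps ! j \<noteq> centered A (tail_utility \<pi> (Suc j))}"

text \<open>All movers after the last deviation from the fair prices are indifferent among the options,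
  so the last mover may break the tie in favour of the objective of the player who pays the price
  of that deviation; this is what deters deviations.\<close>

definition canonical_choice :: "'a \<Rightarrow> nat list \<Rightarrow> ('a \<Rightarrow> real) list \<Rightarrow> 'a" where
  "canonical_choice a \<pi> ps = (if deviations \<pi> ps = {} then a else
     arg_max_on (\<lambda>y. tail_utility \<pi> (Suc (Max (deviations \<pi> ps))) y - (ps ! Max (deviations \<pi> ps)) y) A)"

definition canonical_profile :: "'a \<Rightarrow> nat \<Rightarrow> 'a strat" where
  "canonical_profile a = (\<lambda>i. \<lparr>sbid = equilibrium_bid,
     spr = (\<lambda>b \<pi> ps. centered A (tail_utility \<pi> (Suc (length ps)))),
     sch = (\<lambda>b \<pi> ps. canonical_choice a \<pi> ps)\<rparr>)"

lemma spr_canonical_profile: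
  "spr (canonical_profile a i) b \<pi> ps = centered A (tail_utility \<pi> (Suc (length ps)))"
  by (simp add: canonical_profile_def)

lemma canonical_profile_valid: "efficient n A u a \<Longrightarrow> valid_profile n A (canonical_profile a)"
  using surplus_nonneg two_le_n centered_in_Pset[OF finite_A] arg_max_on_finite[OF finite_A A_nonempty]
  by (auto simp: valid_profile_def valid_strat_def canonical_profile_def canonical_choice_def
      efficient_def equilibrium_bid_def)

lemma final_prices_canonical:
  assumes "length ps \<le> n - 1"
  shows "final_prices n (canonical_profile a) b \<pi> ps =
    ps @ map (\<lambda>j. centered A (tail_utility \<pi> (Suc j))) [length ps..<n - 1]"
proof -
  have "ext_prices (canonical_profile a) b \<pi> m ps =
      ps @ map (\<lambda>j. centered A (tail_utility \<pi> (Suc j))) [length ps..<length ps + m]" for m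
  proof (induction m arbitrary: ps)
    case (Suc m)
    have "[length ps..<length ps + Suc m] = length ps # [Suc (length ps)..<Suc (length ps) + m]"
      by (simp add: upt_conv_Cons del: upt_Suc)
    then show ?case using Suc.IH by (simp add: canonical_profile_def del: upt_Suc)
  qed simp
  moreover have "length ps + (n - 1 - length ps) = n - 1" using assms by simp
  ultimately show ?thesis by (simp add: final_prices_def)
qed

lemma finite_deviations: "finite (deviations \<pi> ps)"
  by (simp add: deviations_def)

lemma deviations_final_prices_canonical:
  assumes "length ps \<le> n - 1"
  shows "deviations \<pi> (final_prices n (canonical_profile a) b \<pi> ps) = deviations \<pi> ps"
proof -
  let ?c = "\<lambda>j. centered A (tail_utility \<pi> (Suc j))"
  have "(ps @ map ?c [length ps..<n - 1]) ! j = (if j < length ps then ps ! j else ?c j)"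
    if "j < n - 1" for j
  proof (cases "j < length ps")
    case False
    then have "[length ps..<n - 1] ! (j - length ps) = j" using that by simp
    then show ?thesis using False that by (simp add: nth_append)
  qed (simp add: nth_append)
  then show ?thesis
    unfolding deviations_def final_prices_canonical[OF assms] using assms by auto
qed

lemma outcome_opt_canonical:
  "outcome_opt n (canonical_profile a) b \<pi> ps = canonical_choice a \<pi> (final_prices n (canonical_profile a) b \<pi> ps)"
  by (simp add: outcome_opt_def canonical_profile_def)

lemma objective_const_if_fair:
  assumes "0 < length ps" "length ps - 1 \<notin> deviations \<pi> ps" "y \<in> A"
  shows "tail_utility \<pi> (length ps) y - last_price ps y = tail_avg \<pi> (length ps)"
proof -
  have "last_price ps = centered A (tail_utility \<pi> (length ps))"
    using assms(1,2) by (simp add: deviations_def last_price_def last_conv_nth)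
  then show ?thesis using diff_centered[OF assms(3)] by (simp add: tail_avg_eq_mean)
qed

lemma canonical_outcome_max:
  fixes b :: "nat \<Rightarrow> real"
  assumes a: "efficient n A u a" and \<pi>: "\<pi> \<in> orders n" and L: "length ps \<le> n - 1" and y: "y \<in> A"
  defines "x \<equiv> outcome_opt n (canonical_profile a) b \<pi> ps"
  shows "tail_utility \<pi> (length ps) y - last_price ps y \<le> tail_utility \<pi> (length ps) x - last_price ps x"
proof -
  have xA: "x \<in> A" unfolding x_def by (rule outcome_opt_in_A[OF canonical_profile_valid[OF a] \<pi>])
  show ?thesis
  proof (cases "length ps - 1 \<in> deviations \<pi> ps")
    case True
    define J where "J = Max (deviations \<pi> ps)"
    have "J \<in> deviations \<pi> ps" "length ps - 1 \<le> J"
      using True finite_deviations unfolding J_def by (auto intro: Max_in Max_ge)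
    then have J: "J = length ps - 1" "J < length ps" "Suc J = length ps"
      by (auto simp: deviations_def)
    then have "last_price ps = ps ! J" by (auto simp: last_price_def last_conv_nth)
    moreover have "x = arg_max_on (\<lambda>y. tail_utility \<pi> (Suc J) y - (ps ! J) y) A"
      using True nth_final_prices[OF J(2)] deviations_final_prices_canonical[OF L]
      unfolding x_def outcome_opt_canonical canonical_choice_def J_def by auto
    ultimately show ?thesis
      using arg_max_on_finite(2)[OF finite_A A_nonempty y] J by simp
  next
    case False
    show ?thesis
    proof (cases "length ps = 0")
      case True
      then have "deviations \<pi> ps = {}" by (simp add: deviations_def)
      then have "x = a"
        using L unfolding x_def
        by (simp add: outcome_opt_canonical deviations_final_prices_canonical canonical_choice_def)
      then show ?thesis using a y True tail_utility_0[OF \<pi>] by (simp add: efficient_def last_price_def)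
    next
      case False
      then show ?thesis using objective_const_if_fair \<open>length ps - 1 \<notin> _\<close> y xA by simp
    qed
  qed
qed

lemma canonical_mover_payoff:
  fixes b :: "nat \<Rightarrow> real"
  assumes a: "efficient n A u a" and \<pi>: "\<pi> \<in> orders n" and L: "length ps \<le> n - 1"
  defines "x \<equiv> outcome_opt n (canonical_profile a) b \<pi> ps"
  shows "cont_payoff n u (canonical_profile a) b \<pi> ps (\<pi> ! length ps) =
    tail_utility \<pi> (length ps) x - last_price ps x - tail_avg \<pi> (Suc (length ps))
    + bid_transfer n b \<pi> (\<pi> ! length ps)"
proof -
  have L': "length ps < n" using L two_le_n by simp
  have xA: "x \<in> A" unfolding x_def by (rule outcome_opt_in_A[OF canonical_profile_valid[OF a] \<pi>])
  show ?thesis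
  proof (cases "length ps < n - 1")
    case True
    then show ?thesis
      using cont_payoff_mover[OF \<pi> L', of u "canonical_profile a" b]
        diff_centered[OF xA, of "tail_utility \<pi> (Suc (length ps))"]
        tail_utility_Suc[OF L', of \<pi> x]
      by (simp add: x_def spr_canonical_profile tail_avg_eq_mean)
  next
    case False
    then have "Suc (length ps) = n" using L two_le_n by simp
    then show ?thesis
      using False cont_payoff_mover[OF \<pi> L', of u "canonical_profile a" b] tail_utility_Suc[OF L', of \<pi> x]
      by (simp add: x_def)
  qed
qed

lemma canonical_mover_no_deviation:
  assumes a: "efficient n A u a" and \<pi>: "\<pi> \<in> orders n" and L: "length ps \<le> n - 1"
    and s: "valid_strat A s"
  shows "cont_payoff n u ((canonical_profile a)(\<pi> ! length ps := s)) b \<pi> ps (\<pi> ! length ps)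
       \<le> cont_payoff n u (canonical_profile a) b \<pi> ps (\<pi> ! length ps)"
proof -
  let ?\<sigma> = "canonical_profile a" and ?L = "length ps"
  let ?bt = "bid_transfer n b \<pi> (\<pi> ! ?L)" and ?x = "outcome_opt n (canonical_profile a) b \<pi> ps"
  let ?obj = "\<lambda>y. tail_utility \<pi> ?L y - last_price ps y"
  have payoff: "cont_payoff n u ?\<sigma> b \<pi> ps (\<pi> ! ?L) = ?obj ?x - tail_avg \<pi> (Suc ?L) + ?bt"
    by (rule canonical_mover_payoff[OF a \<pi> L])
  show ?thesis
  proof (cases "?L < n - 1")
    case True
    define q where "q = spr s b \<pi> ps"
    let ?x' = "outcome_opt n ?\<sigma> b \<pi> (ps @ [q])"
    have q: "q \<in> Pset A" using s by (simp add: valid_strat_def q_def)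
    have x': "?x' \<in> A" by (rule outcome_opt_in_A[OF canonical_profile_valid[OF a] \<pi>])
    have "\<forall>y\<in>A. tail_utility \<pi> (Suc ?L) y - q y \<le> tail_utility \<pi> (Suc ?L) ?x' - q ?x'"
      using canonical_outcome_max[OF a \<pi>, of "ps @ [q]"] True by simp
    then have "u (\<pi> ! ?L) ?x' + q ?x' \<le> tail_utility \<pi> ?L ?x' - tail_avg \<pi> (Suc ?L)"
      using mover_gain_le[OF q x'] True by simp
    moreover have "cont_payoff n u (?\<sigma>(\<pi> ! ?L := s)) b \<pi> ps (\<pi> ! ?L) =
        u (\<pi> ! ?L) ?x' - last_price ps ?x' + q ?x' + ?bt"
      using cont_payoff_deviate_mover[OF \<pi> True] cont_payoff_previous_mover[OF \<pi> True]
      by (simp add: q_def)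
    moreover have "?obj ?x' \<le> ?obj ?x" by (rule canonical_outcome_max[OF a \<pi> L x'])
    ultimately show ?thesis using payoff by simp
  next
    case False
    then have last: "?L = n - 1" "?L < n" using L two_le_n by simp_all
    let ?y = "sch s b \<pi> ps"
    have y: "?y \<in> A" using s by (simp add: valid_strat_def)
    have "outcome_opt n (?\<sigma>(\<pi> ! ?L := s)) b \<pi> ps = ?y"
      using last(1) by (simp add: outcome_opt_def final_prices_full)
    then have "cont_payoff n u (?\<sigma>(\<pi> ! ?L := s)) b \<pi> ps (\<pi> ! ?L) = ?obj ?y - tail_avg \<pi> (Suc ?L) + ?bt"
      using cont_payoff_mover[OF \<pi> last(2), of u "?\<sigma>(\<pi> ! ?L := s)" b]
        tail_utility_Suc[OF last(2), of \<pi> ?y] last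
      by simp
    then show ?thesis using payoff canonical_outcome_max[OF a \<pi> L y] by simp
  qed
qed

lemma canonical_price_stage_SPE:
  assumes a: "efficient n A u a" and \<pi>: "\<pi> \<in> orders n"
  shows "price_stage_SPE (canonical_profile a) b \<pi>"
  unfolding price_stage_SPE_def
proof (intro allI impI)
  fix ps i s
  assume ps: "set ps \<subseteq> Pset A \<and> length ps \<le> n - 1" and i: "i < n" and s: "valid_strat A s"
  let ?\<sigma> = "canonical_profile a"
  obtain m where m: "m < n" "\<pi> ! m = i" using orders_obtain_position[OF \<pi> i] .
  show "cont_payoff n u (?\<sigma>(i := s)) b \<pi> ps i \<le> cont_payoff n u ?\<sigma> b \<pi> ps i"
  proof (cases "m < length ps")
    case True
    then show ?thesis using cont_payoff_deviate_past[OF \<pi> True] ps m(2) by simp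
  next
    case False
    define h where "h = ext_prices ?\<sigma> b \<pi> (m - length ps) ps"
    have h: "length h = m" "length ps + (m - length ps) \<le> n - 1" using False m(1) by (simp_all add: h_def)
    have "ext_prices (?\<sigma>(\<pi> ! m := s)) b \<pi> (m - length ps) ps = h"
      unfolding h_def using False m(1) by (intro ext_prices_deviate_elsewhere[OF \<pi>]) auto
    then have "cont_payoff n u (?\<sigma>(i := s)) b \<pi> ps i = cont_payoff n u (?\<sigma>(i := s)) b \<pi> h i"
      using cont_payoff_ext_prices[OF h(2), of u "?\<sigma>(i := s)" b \<pi> i] m(2) by simp
    moreover have "cont_payoff n u ?\<sigma> b \<pi> ps i = cont_payoff n u ?\<sigma> b \<pi> h i"
      using cont_payoff_ext_prices[OF h(2), of u ?\<sigma> b \<pi> i] by (simp add: h_def)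
    ultimately show ?thesis
      using canonical_mover_no_deviation[OF a \<pi> _ s, of h b] h m by simp
  qed
qed

lemma price_stage_SPE_exp_payoff:
  assumes "\<And>\<pi>. \<pi> \<in> orders_W n b \<Longrightarrow> price_stage_SPE \<sigma> b \<pi>" "i < n" "valid_strat A s"
  shows "exp_payoff n u (\<sigma>(i := s)) b i \<le> exp_payoff n u \<sigma> b i"
  unfolding exp_payoff_def using assms price_stage_SPE_D[of \<sigma> b _ "[]"]
  by (intro divide_right_mono sum_mono) auto

lemma canonical_root_no_deviation:
  assumes a: "efficient n A u a" and i: "i < n" and s: "valid_strat A s"
  shows "root_payoff n u ((canonical_profile a)(i := s)) i \<le> root_payoff n u (canonical_profile a) i"
proof -
  let ?\<sigma> = "canonical_profile a" and ?b = "\<lambda>j. if j < n then equilibrium_bid else 0"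
  have vp: "valid_profile n A ?\<sigma>" by (rule canonical_profile_valid[OF a])
  have SG: "\<pi> \<in> orders_W n b \<Longrightarrow> price_stage_SPE ?\<sigma> b \<pi>" for b \<pi>
    by (rule canonical_price_stage_SPE[OF a]) (simp add: orders_W_def)
  have eq: "bid_equilibrium ?b" by (rule uniform_bid_equilibrium)
  have b: "bids_of n ?\<sigma> = ?b" "bids_of n (?\<sigma>(i := s)) = ?b(i := sbid s)"
    using i by (auto simp: bids_of_def canonical_profile_def)
  have "0 \<le> sbid s" using s by (simp add: valid_strat_def)
  then have "chance_value (?b(i := sbid s)) i \<le> chance_value ?b i"
    using eq i unfolding bid_equilibrium_def by blast
  moreover have "exp_payoff n u (?\<sigma>(i := s)) (?b(i := sbid s)) i \<le> exp_payoff n u ?\<sigma> (?b(i := sbid s)) i"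
    by (rule price_stage_SPE_exp_payoff[OF SG i s])
  ultimately show ?thesis
    unfolding root_payoff_def b using exp_payoff_eq_chance_value[OF SG vp i] by simp
qed

lemma canonical_SPE:
  assumes a: "efficient n A u a"
  shows "SPE n A u (canonical_profile a)"
  unfolding SPE_def
proof (intro conjI allI impI)
  let ?\<sigma> = "canonical_profile a"
  show "valid_profile n A ?\<sigma>" by (rule canonical_profile_valid[OF a])
  fix i s assume "i < n" "valid_strat A s"
  then show "root_payoff n u (?\<sigma>(i := s)) i \<le> root_payoff n u ?\<sigma> i"
    by (rule canonical_root_no_deviation[OF a])
next
  fix b i s assume "i < n" "valid_strat A s"
  then show "exp_payoff n u ((canonical_profile a)(i := s)) b i \<le> exp_payoff n u (canonical_profile a) b i"
    using canonical_price_stage_SPE[OF a] by (intro price_stage_SPE_exp_payoff) (auto simp: orders_W_def)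
next
  fix b \<pi> ps i s
  assume "valid_bids n b \<and> \<pi> \<in> orders_W n b \<and> set ps \<subseteq> Pset A \<and> length ps \<le> n - 1"
    and "i < n" "valid_strat A s"
  then show "cont_payoff n u ((canonical_profile a)(i := s)) b \<pi> ps i \<le> cont_payoff n u (canonical_profile a) b \<pi> ps i"
    using canonical_price_stage_SPE[OF a] price_stage_SPE_D by (auto simp: orders_W_def)
qed

lemma realized_canonical: "realized n (canonical_profile a) \<pi> = a"
  using deviations_final_prices_canonical[of "[]"]
  by (simp add: realized_def outcome_opt_canonical canonical_choice_def deviations_def)

end

theorem proposition5:
  fixes n :: nat and A :: "'a set" and u :: "nat \<Rightarrow> 'a \<Rightarrow> real"
  assumes "n \<ge> 2" and "finite A" and "A \<noteq> {}"
  shows "(\<forall>\<sigma>. SPE n A u \<sigma> \<longrightarrow>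
            (\<forall>pi\<in>orders_W n (bids_of n \<sigma>). efficient n A u (realized n \<sigma> pi)))
       \<and> (\<forall>a. efficient n A u a \<longrightarrow>
            (\<exists>\<sigma>. SPE n A u \<sigma> \<and> (\<forall>pi\<in>orders_W n (bids_of n \<sigma>). realized n \<sigma> pi = a)))
       \<and> (\<forall>\<sigma>. SPE n A u \<sigma> \<longrightarrow>
            (\<forall>i<n. \<forall>j<n. root_payoff n u \<sigma> i - root_payoff n u \<sigma> j = avg A u i - avg A u j))"
proof -
  interpret bid_price_choose n A u using assms by unfold_locales
  have "\<exists>\<sigma>. SPE n A u \<sigma> \<and> (\<forall>pi\<in>orders_W n (bids_of n \<sigma>). realized n \<sigma> pi = a)"
    if "efficient n A u a" for a
    using canonical_SPE[OF that] realized_canonical by blast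
  then show ?thesis
    using SPE_realized_efficient SPE_root_payoff by auto
qed

end
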